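(* Let $W$ be the function on pairs of integers defined as in the context. Let $k \ge 1$ be an integer. Then for all integers $n, m$ with $n \ge m \ge 1$ and $m \le k$, $$W(n,m)\ \ge\ \frac{\sqrt{2k-2}}{k}\cdot\frac{m}{\sqrt{n+m}}.$$
   Context: $W:\mathbb{Z}\times\mathbb{Z}\to[0,1]$ is defined recursively (by induction on $n+m$) as follows: - $W(n,m)=0$ if $m\le 0$; - $W(n,m)=1$ if $m\ge 1$ and $n<m$; - for $n\ge m\ge 1$, $W(n,m)=\frac{n}{n+m}W(n-2,m)+\frac{m}{n+m}W(n-1,m-1)$. $W(n,m)$ is the probability that the mafia wins the mafia game without detectives, started with $n$ civilians and $m$ mafia members, when both sides play uniformly at random. *)

theory Defs
  imports Complex_Main
begin

(* W(n,m): probability that the mafia wins (no detectives), n civilians, m mafia *)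
function W :: "int \<Rightarrow> int \<Rightarrow> real" where
  "W n m = (if m \<le> 0 then 0
            else if n < m then 1
            else (real_of_int n / real_of_int (n + m)) * W (n - 2) m
               + (real_of_int m / real_of_int (n + m)) * W (n - 1) (m - 1))"
  by pat_completeness auto
termination
  by (relation "measure (\<lambda>(n, m). nat (n + m))") auto

declare W.simps [simp del]

end

theory Submission
  imports Defs
begin

(* Call c \<ge> 0 admissible for k if c\<^sup>2 \<le> 1/2 and c\<^sup>2 j\<^sup>2 \<le> 2j - 2 for
   2 \<le> j \<le> k.  We show, by induction along the recursion of W, that for an admissible c
   the bound  c m / sqrt (n + m) \<le> W n m  holds whenever 1 \<le> m \<le> k and n \<ge> m - 2.
   The weaker hypothesis n \<ge> m - 2 (instead of n \<ge> m) is what makes the induction close: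
   both recursive calls W (n-2) m and W (n-1) (m-1) stay in this range.
   - On the boundary (n < m, where W = 1) admissibility gives c m \<le> sqrt (n + m).
   - The special state n = m = 1 is checked by hand, W 1 1 = 1/2.
   - Otherwise s = n + m \<ge> 3 and the recursion averages the two inductive bounds; the
     result dominates c m / sqrt s because sqrt s * sqrt (s - 2) \<le> s - 1.
   Finally c = sqrt (2k - 2) / k is admissible, since c\<^sup>2 j\<^sup>2 \<le> 2j - 2 rearranges to
   (k - j)(kj - j - k) \<ge> 0, which yields the theorem. *)

lemma W_nonpos_mafia: "m \<le> 0 \<Longrightarrow> W n m = 0"
  by (subst W.simps) simp

lemma W_mafia_majority: "1 \<le> m \<Longrightarrow> n < m \<Longrightarrow> W n m = 1"
  by (subst W.simps) simp

lemma W_step: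
  assumes "1 \<le> m" and "m \<le> n"
  shows "W n m = real_of_int n / real_of_int (n + m) * W (n - 2) m
               + real_of_int m / real_of_int (n + m) * W (n - 1) (m - 1)"
  using assms by (subst W.simps) simp

lemma W_1_1: "W 1 1 = 1/2"
  by (simp add: W_step W_nonpos_mafia W_mafia_majority)

(* The constraints on the constant c that the inductive bound needs: c\<^sup>2 \<le> 1/2 covers
   the states with one mafia member, the second condition the boundary states n < m. *)
definition admissible :: "real \<Rightarrow> int \<Rightarrow> bool" where
  "admissible c k \<longleftrightarrow> 0 \<le> c \<and> c\<^sup>2 \<le> 1/2 \<and>
     (\<forall>j. 2 \<le> j \<and> j \<le> k \<longrightarrow> c\<^sup>2 * (real_of_int j)\<^sup>2 \<le> 2 * real_of_int j - 2)"

lemma admissible_le_half_sqrt2: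
  assumes "admissible c k"
  shows "c \<le> sqrt 2 / 2"
proof (rule power2_le_imp_le)
  show "c\<^sup>2 \<le> (sqrt 2 / 2)\<^sup>2"
    using assms by (simp add: admissible_def power_divide)
qed simp

lemma admissible_sqrt_const:
  assumes "1 \<le> k"
  shows "admissible (sqrt (2 * real_of_int k - 2) / real_of_int k) k"
proof -
  define c where "c = sqrt (2 * real_of_int k - 2) / real_of_int k"
  have k: "real_of_int k \<ge> 1" using assms by simp
  have c2: "c\<^sup>2 = (2 * real_of_int k - 2) / (real_of_int k)\<^sup>2"
    using k unfolding c_def by (simp add: power_divide)
  have "2 * (2 * real_of_int k - 2) \<le> (real_of_int k)\<^sup>2"
    using sum_squares_ge_zero[of "real_of_int k - 2" 0]
    by (simp add: power2_eq_square algebra_simps)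
  hence half: "c\<^sup>2 \<le> 1/2"
    using k by (simp add: c2 divide_le_eq)
  have "c\<^sup>2 * (real_of_int j)\<^sup>2 \<le> 2 * real_of_int j - 2" if "2 \<le> j" "j \<le> k" for j
  proof -
    have j: "real_of_int j \<ge> 2" "real_of_int j \<le> real_of_int k" using that by auto
    have "(real_of_int k - 1) * (real_of_int j - 1) \<ge> 1 * 1"
      using j by (intro mult_mono) auto
    hence "(real_of_int j - real_of_int k)
             * (real_of_int k * real_of_int j - real_of_int j - real_of_int k) \<le> 0"
      using j by (intro mult_nonpos_nonneg) (auto simp: algebra_simps)
    hence "(2 * real_of_int k - 2) * (real_of_int j)\<^sup>2 \<le> (2 * real_of_int j - 2) * (real_of_int k)\<^sup>2"
      by (simp add: power2_eq_square algebra_simps)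
    thus ?thesis
      using k by (simp add: c2 divide_le_eq)
  qed
  moreover have "0 \<le> c" using k by (simp add: c_def)
  ultimately show ?thesis
    using half unfolding admissible_def c_def by blast
qed

lemma sqrt_mult_shift_le:
  fixes s :: real
  assumes "2 \<le> s"
  shows "sqrt s * sqrt (s - 2) \<le> s - 1"
proof -
  have "sqrt s * sqrt (s - 2) = sqrt (s * (s - 2))"
    by (simp add: real_sqrt_mult)
  also have "\<dots> \<le> sqrt ((s - 1)\<^sup>2)"
    by (rule real_sqrt_le_mono) (simp add: power2_eq_square algebra_simps)
  also have "\<dots> = s - 1" using assms by simp
  finally show ?thesis .
qed

lemma averaging_step:
  fixes n m c x y :: real
  defines "s \<equiv> n + m"
  assumes "0 \<le> n" "1 \<le> m" "0 \<le> c" "3 \<le> s"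
    and x: "c * m / sqrt (s - 2) \<le> x" and y: "c * (m - 1) / sqrt (s - 2) \<le> y"
  shows "c * m / sqrt s \<le> n / s * x + m / s * y"
proof -
  have b: "sqrt (s - 2) > 0" and a: "sqrt s > 0" using \<open>3 \<le> s\<close> by auto
  have "s * sqrt (s - 2) = sqrt s * (sqrt s * sqrt (s - 2))"
    using \<open>3 \<le> s\<close> by (simp add: mult.assoc [symmetric])
  also have "\<dots> \<le> sqrt s * (s - 1)"
    using sqrt_mult_shift_le[of s] \<open>3 \<le> s\<close> a by (intro mult_left_mono) auto
  finally have "1 / sqrt s \<le> (s - 1) / (s * sqrt (s - 2))"
    using a b \<open>3 \<le> s\<close> by (simp add: field_simps)
  hence "c * m * (1 / sqrt s) \<le> c * m * ((s - 1) / (s * sqrt (s - 2)))"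
    using assms(3,4) by (intro mult_left_mono) auto
  also have "\<dots> = n / s * (c * m / sqrt (s - 2)) + m / s * (c * (m - 1) / sqrt (s - 2))"
  proof -
    have "s \<noteq> 0" "sqrt (s - 2) \<noteq> 0" using b \<open>3 \<le> s\<close> by auto
    hence "n / s * (c * m / sqrt (s - 2)) + m / s * (c * (m - 1) / sqrt (s - 2))
             = c * m * (n + m - 1) / (s * sqrt (s - 2))"
      by (simp add: field_simps)
    thus ?thesis by (simp add: s_def)
  qed
  also have "\<dots> \<le> n / s * x + m / s * y"
    using x y assms(2,3,5) by (intro add_mono mult_left_mono) auto
  finally show ?thesis by simp
qed

lemma boundary_bound:
  assumes "admissible c k" "1 \<le> m" "m \<le> k" "m - 2 \<le> n" "n < m"
  shows "c * real_of_int m / sqrt (real_of_int (n + m)) \<le> 1"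
proof (cases "m = 1")
  case True
  have "c \<le> 1"
    using admissible_le_half_sqrt2[OF assms(1)] sqrt2_less_2 by linarith
  moreover have "real_of_int (n + m) = 0 \<or> real_of_int (n + m) = 1"
    using True assms by auto
  ultimately show ?thesis
    using True by (auto simp del: of_int_add)
next
  case False
  hence "2 \<le> m" using assms by simp
  with assms have "(c * real_of_int m)\<^sup>2 \<le> real_of_int (n + m)"
    by (auto simp: admissible_def power_mult_distrib)
  hence "c * real_of_int m \<le> sqrt (real_of_int (n + m))"
    using real_le_rsqrt by blast
  moreover have "real_of_int (n + m) > 0" using \<open>2 \<le> m\<close> assms by simp
  ultimately show ?thesis by simp
qed

lemma W_lower_bound:
  assumes "admissible c k"
  shows "1 \<le> m \<Longrightarrow> m \<le> k \<Longrightarrow> m - 2 \<le> n \<Longrightarrow>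
           c * real_of_int m / sqrt (real_of_int (n + m)) \<le> W n m"
proof (induction n m rule: W.induct)
  case (1 n m)
  have c: "0 \<le> c" using assms by (simp add: admissible_def)
  consider "n < m" | "n = 1 \<and> m = 1" | "m \<le> n" "\<not> (n = 1 \<and> m = 1)" by linarith
  thus ?case
  proof cases
    case 1
    thus ?thesis
      using boundary_bound[OF assms] "1.prems" by (simp add: W_mafia_majority)
  next
    case 2
    have "c / sqrt 2 \<le> 1/2"
      using admissible_le_half_sqrt2[OF assms] by (simp add: field_simps)
    thus ?thesis using 2 by (simp add: W_1_1)
  next
    case 3
    have s: "3 \<le> real_of_int n + real_of_int m" using 3 "1.prems" by auto
    have IH1: "c * real_of_int m / sqrt (real_of_int n + real_of_int m - 2) \<le> W (n - 2) m"
      using "1.IH"(1) "1.prems" 3 by (auto simp: algebra_simps)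
    have IH2: "c * real_of_int (m - 1) / sqrt (real_of_int n + real_of_int m - 2) \<le> W (n - 1) (m - 1)"
    proof (cases "m = 1")
      case True thus ?thesis by (simp add: W_nonpos_mafia)
    next
      case False thus ?thesis using "1.IH"(2) "1.prems" 3 by (auto simp: algebra_simps)
    qed
    show ?thesis
      using averaging_step[OF _ _ c s IH1] IH2 W_step[of m n] "1.prems" 3 by simp
  qed
qed

theorem theorem2:
  fixes k n m :: int
  assumes "k \<ge> 1" and "n \<ge> m" and "m \<ge> 1" and "m \<le> k"
  shows "W n m \<ge> sqrt (2 * real_of_int k - 2) / real_of_int k
                   * (real_of_int m / sqrt (real_of_int (n + m)))"
  using W_lower_bound[OF admissible_sqrt_const[OF assms(1)]] assms by simp

end
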